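(* Let $n$ be a security parameter and $F\colon\{0,1\}^n\to\{0,1\}^m$ a function. If $F^{-1}$ has accessible Shannon entropy at most $k$, then for any $p=p(n)\in(0,1)$, $F^{-1}$ has $p$-accessible max-entropy at most $k/p+O(2^{-k/p})$.
   Context: An $F$-collision-finder is a randomized algorithm $A$ with $A(x;r)\in F^{-1}(F(x))$ for all $x$ and coins $r$. Let $X$ be uniform on $\{0,1\}^n$ and $R$ uniform coins of $A$. $F^{-1}$ has accessible Shannon entropy at most $k$ if for every probabilistic polynomial-time (PPT) $F$-collision-finder $A$, $H(A(X;R)\mid X)\le k$ for all sufficiently large $n$. $F^{-1}$ has $p$-accessible max-entropy at most $k'$ if for every PPT $F$-collision-finder $A$ there is a family of sets $\{\mathcal{L}(x)\}_x$, each of size at most $2^{k'}$, with $x\in\mathcal{L}(x)$, such that $\Pr[A(X;R)\in\mathcal{L}(X)]\ge1-p$ for all sufficiently large $n$. *)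

theory Defs
  imports "HOL-Probability.Probability"
begin

definition bitstrings :: "nat \<Rightarrow> bool list set" where
  "bitstrings n = {xs. length xs = n}"

definition uniform_bits :: "nat \<Rightarrow> bool list pmf" where
  "uniform_bits n = pmf_of_set (bitstrings n)"

text \<open>A (uniform) randomized algorithm: a coin-length function rho and
  the deterministic map A n x r (security parameter n, input x, coins r).\<close>
type_synonym algorithm = "(nat \<Rightarrow> nat) \<times> (nat \<Rightarrow> bool list \<Rightarrow> bool list \<Rightarrow> bool list)"

type_synonym func_family = "nat \<Rightarrow> bool list \<Rightarrow> bool list"

definition collision_finder :: "func_family \<Rightarrow> algorithm \<Rightarrow> bool" where
  "collision_finder F alg \<longleftrightarrow>
     (\<forall>n x r. x \<in> bitstrings n \<longrightarrow> r \<in> bitstrings (fst alg n) \<longrightarrow>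
        snd alg n x r \<in> bitstrings n \<and> F n (snd alg n x r) = F n x)"

definition shannon_entropy :: "'a pmf \<Rightarrow> real" where
  "shannon_entropy q = (\<Sum>y\<in>set_pmf q. pmf q y * log 2 (1 / pmf q y))"

definition out_dist :: "algorithm \<Rightarrow> nat \<Rightarrow> bool list \<Rightarrow> bool list pmf" where
  "out_dist alg n x = map_pmf (snd alg n x) (uniform_bits (fst alg n))"

definition cond_entropy :: "algorithm \<Rightarrow> nat \<Rightarrow> real" where
  "cond_entropy alg n =
     measure_pmf.expectation (uniform_bits n) (\<lambda>x. shannon_entropy (out_dist alg n x))"

text \<open>The class of efficient (PPT) algorithms is abstracted as a set C of algorithms.\<close>
definition accessible_shannon_le ::
  "algorithm set \<Rightarrow> func_family \<Rightarrow> (nat \<Rightarrow> real) \<Rightarrow> bool" where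
  "accessible_shannon_le C F k \<longleftrightarrow>
     (\<forall>alg\<in>C. collision_finder F alg \<longrightarrow>
        (\<forall>\<^sub>F n in sequentially. cond_entropy alg n \<le> k n))"

definition accessible_maxent_le ::
  "algorithm set \<Rightarrow> func_family \<Rightarrow> (nat \<Rightarrow> real) \<Rightarrow> (nat \<Rightarrow> real) \<Rightarrow> bool" where
  "accessible_maxent_le C F p k' \<longleftrightarrow>
     (\<forall>alg\<in>C. collision_finder F alg \<longrightarrow>
        (\<forall>\<^sub>F n in sequentially.
           \<exists>L :: bool list \<Rightarrow> bool list set.
             (\<forall>x\<in>bitstrings n. x \<in> L x \<and> finite (L x) \<and> real (card (L x)) \<le> 2 powr k' n) \<and>
             measure_pmf.prob (pair_pmf (uniform_bits n) (uniform_bits (fst alg n)))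
               {(x, r). snd alg n x r \<in> L x} \<ge> 1 - p n))"

end

theory Submission imports Defs begin

text \<open>
  For a distribution q with entropy H and any b > 0, the outcomes of probability at least
  2^-b are at most 2^b in number, and by Markov's inequality applied to the surprisal
  log (1 / q y) the remaining outcomes have total mass at most H / b.  Applying this to each
  output distribution A(x;R), with b slightly above k / p so that the average entropy
  satisfies H(A(X;R) | X) / b \<le> p, gives lists L(x) of size at most 2^(k/p) + 2, and
  2^a + 2 \<le> 2^(a + (2 / ln 2) 2^-a) absorbs the additive 2 into the exponent.
\<close>

lemma finite_bitstrings: "finite (bitstrings n)"
  using finite_lists_length_eq[of "UNIV :: bool set" n] by (simp add: bitstrings_def)

lemma bitstrings_nonempty: "bitstrings n \<noteq> {}"
  by (auto simp: bitstrings_def intro!: exI[of _ "replicate n True"])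

lemma set_pmf_uniform_bits: "set_pmf (uniform_bits n) = bitstrings n"
  by (simp add: uniform_bits_def finite_bitstrings bitstrings_nonempty)

lemma finite_set_pmf_out_dist: "finite (set_pmf (out_dist alg n x))"
  by (simp add: out_dist_def set_pmf_uniform_bits finite_bitstrings)

lemma measure_pair_pmf_eq_expectation:
  "measure_pmf.prob (pair_pmf P U) {(x, r). f x r \<in> L x} =
   measure_pmf.expectation P (\<lambda>x. measure_pmf.prob (map_pmf (f x) U) (L x))"
proof -
  have "measure_pmf.prob (pair_pmf P U) {(x, r). f x r \<in> L x} =
      measure_pmf.prob (bind_pmf P (\<lambda>x. map_pmf (\<lambda>r. (x, r)) U)) {(x, r). f x r \<in> L x}"
    by (simp add: pair_pmf_def map_pmf_def)
  also have "\<dots> = measure_pmf.expectation P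
      (\<lambda>x. measure_pmf.prob (map_pmf (\<lambda>r. (x, r)) U) {(x, r). f x r \<in> L x})"
    unfolding measure_pmf_bind
    by (rule measure_pmf.measure_bind[where N = "count_space UNIV"])
      (auto simp: measure_pmf_in_subprob_algebra)
  finally show ?thesis
    by (simp add: vimage_def)
qed

lemma surprisal_term_nonneg:
  assumes "y \<in> set_pmf q"
  shows "0 \<le> pmf q y * log 2 (1 / pmf q y)"
proof -
  have "0 < pmf q y" "pmf q y \<le> 1"
    using assms by (auto simp: set_pmf_iff pmf_le_1 less_le)
  then show ?thesis
    by simp
qed

definition heavy_set :: "'a pmf \<Rightarrow> real \<Rightarrow> 'a set" where
  "heavy_set q b = {y \<in> set_pmf q. 2 powr - b \<le> pmf q y}"

lemma finite_heavy_set: "finite (set_pmf q) \<Longrightarrow> finite (heavy_set q b)"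
  by (simp add: heavy_set_def)

lemma card_heavy_set_le:
  assumes "finite (set_pmf q)"
  shows "real (card (heavy_set q b)) \<le> 2 powr b"
proof -
  have "real (card (heavy_set q b)) * 2 powr - b \<le> sum (pmf q) (heavy_set q b)"
    using sum_bounded_below[of "heavy_set q b" "2 powr - b" "pmf q"]
    by (auto simp: heavy_set_def)
  also have "\<dots> = measure_pmf.prob q (heavy_set q b)"
    using assms by (simp add: finite_heavy_set measure_measure_pmf_finite)
  also have "\<dots> \<le> 1"
    by simp
  finally have "real (card (heavy_set q b)) * 2 powr - b * 2 powr b \<le> 2 powr b"
    by simp
  then show ?thesis
    by (simp add: mult.assoc powr_add[symmetric])
qed

lemma measure_light_le_entropy_div:
  assumes fin: "finite (set_pmf q)" and "0 < b"
  shows "measure_pmf.prob q (set_pmf q - heavy_set q b) \<le> shannon_entropy q / b"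
proof -
  have light: "pmf q y \<le> pmf q y * log 2 (1 / pmf q y) / b"
    if "y \<in> set_pmf q - heavy_set q b" for y
  proof -
    have pos: "0 < pmf q y"
      using that by (auto simp: set_pmf_iff less_le)
    have "2 powr b < 1 / pmf q y"
      using that pos by (auto simp: heavy_set_def powr_minus field_simps)
    then have "b < log 2 (1 / pmf q y)"
      using pos by (simp add: less_log_iff)
    then show ?thesis
      using pos \<open>0 < b\<close> by (simp add: field_simps)
  qed
  have "measure_pmf.prob q (set_pmf q - heavy_set q b) = sum (pmf q) (set_pmf q - heavy_set q b)"
    using fin by (simp add: measure_measure_pmf_finite)
  also have "\<dots> \<le> (\<Sum>y\<in>set_pmf q - heavy_set q b. pmf q y * log 2 (1 / pmf q y) / b)"
    using light by (rule sum_mono)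
  also have "\<dots> \<le> (\<Sum>y\<in>set_pmf q. pmf q y * log 2 (1 / pmf q y) / b)"
    using fin surprisal_term_nonneg \<open>0 < b\<close> by (intro sum_mono2 divide_nonneg_pos) auto
  also have "\<dots> = shannon_entropy q / b"
    by (simp add: shannon_entropy_def sum_divide_distrib)
  finally show ?thesis .
qed

lemma measure_heavy_set_ge:
  assumes "finite (set_pmf q)" and "0 < b"
  shows "1 - shannon_entropy q / b \<le> measure_pmf.prob q (heavy_set q b)"
proof -
  have "measure_pmf.prob q (set_pmf q - heavy_set q b) =
      measure_pmf.prob q (set_pmf q) - measure_pmf.prob q (heavy_set q b)"
    by (rule measure_pmf.finite_measure_Diff) (auto simp: heavy_set_def)
  moreover have "measure_pmf.prob q (set_pmf q) = 1"
    by (simp add: measure_pmf.prob_eq_1 AE_pmfI)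
  ultimately show ?thesis
    using measure_light_le_entropy_div[OF assms] by simp
qed

lemma exists_small_sets_of_expected_entropy:
  fixes P :: "'a pmf" and Q :: "'a \<Rightarrow> 'a pmf"
  assumes finP: "finite (set_pmf P)" and finQ: "\<And>x. finite (set_pmf (Q x))"
    and "0 < p" and entropy: "measure_pmf.expectation P (\<lambda>x. shannon_entropy (Q x)) \<le> p * a"
  shows "\<exists>L. (\<forall>x. x \<in> L x \<and> finite (L x) \<and> real (card (L x)) \<le> 2 powr a + 2) \<and>
             1 - p \<le> measure_pmf.expectation P (\<lambda>x. measure_pmf.prob (Q x) (L x))"
proof -
  \<comment> \<open>b = a would not do: the Markov bound needs b > 0, and a may be 0.\<close>
  define b where "b = log 2 (2 powr a + 1)"
  define L where "L x = insert x (heavy_set (Q x) b)" for x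
  have b_powr: "2 powr b = 2 powr a + 1"
    by (simp add: b_def add_pos_pos)
  have "0 < b"
    unfolding b_def by (simp add: add_pos_pos)
  have "a \<le> b"
    using b_powr by (simp flip: powr_le_cancel_iff[of 2])
  have card: "real (card (L x)) \<le> 2 powr a + 2" for x
  proof -
    have "card (L x) \<le> Suc (card (heavy_set (Q x) b))"
      using finQ[of x] by (simp add: L_def finite_heavy_set card_insert_if)
    then show ?thesis
      using card_heavy_set_le[OF finQ, of x b] b_powr by simp
  qed
  have "measure_pmf.expectation P (\<lambda>x. 1 - shannon_entropy (Q x) / b) \<le>
      measure_pmf.expectation P (\<lambda>x. measure_pmf.prob (Q x) (L x))"
  proof (rule integral_mono_AE)
    show "AE x in P. 1 - shannon_entropy (Q x) / b \<le> measure_pmf.prob (Q x) (L x)"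
    proof (rule AE_pmfI)
      fix x
      have "measure_pmf.prob (Q x) (heavy_set (Q x) b) \<le> measure_pmf.prob (Q x) (L x)"
        by (rule measure_pmf.finite_measure_mono) (auto simp: L_def)
      then show "1 - shannon_entropy (Q x) / b \<le> measure_pmf.prob (Q x) (L x)"
        using measure_heavy_set_ge[OF finQ \<open>0 < b\<close>, of x] by linarith
    qed
  qed (auto intro: integrable_measure_pmf_finite[OF finP])
  moreover have "measure_pmf.expectation P (\<lambda>x. 1 - shannon_entropy (Q x) / b) =
      1 - measure_pmf.expectation P (\<lambda>x. shannon_entropy (Q x)) / b"
    by (simp add: integrable_measure_pmf_finite[OF finP])
  moreover have "measure_pmf.expectation P (\<lambda>x. shannon_entropy (Q x)) / b \<le> p"
  proof -
    have "p * a \<le> p * b"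
      using \<open>a \<le> b\<close> \<open>0 < p\<close> by simp
    then show ?thesis
      using entropy \<open>0 < b\<close> by (simp add: pos_divide_le_eq)
  qed
  ultimately show ?thesis
    using card finQ by (auto simp: L_def finite_heavy_set intro!: exI[of _ L])
qed

lemma powr_plus_two_le: "2 powr (a::real) + 2 \<le> 2 powr (a + 2 / ln 2 * 2 powr - a)"
proof -
  define t where "t = 2 powr - a"
  have "2 powr a * t = 1"
    by (simp add: t_def powr_add[symmetric])
  moreover have "2 powr (a + 2 / ln 2 * t) = 2 powr a * exp (2 * t)"
    by (simp add: powr_def exp_add[symmetric] algebra_simps)
  moreover have "2 powr a * (1 + 2 * t) \<le> 2 powr a * exp (2 * t)"
    by (intro mult_left_mono) (auto simp: exp_ge_add_one_self)
  ultimately show ?thesis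
    by (simp add: t_def algebra_simps)
qed

lemma exists_small_sets_of_cond_entropy:
  assumes "0 < p" and entropy: "cond_entropy alg n \<le> p * a"
  shows "\<exists>L. (\<forall>x\<in>bitstrings n. x \<in> L x \<and> finite (L x) \<and>
                 real (card (L x)) \<le> 2 powr (a + 2 / ln 2 * 2 powr - a)) \<and>
             1 - p \<le> measure_pmf.prob (pair_pmf (uniform_bits n) (uniform_bits (fst alg n)))
                         {(x, r). snd alg n x r \<in> L x}"
proof -
  have "finite (set_pmf (uniform_bits n))"
    by (simp add: set_pmf_uniform_bits finite_bitstrings)
  from exists_small_sets_of_expected_entropy[OF this finite_set_pmf_out_dist \<open>0 < p\<close>
      entropy[unfolded cond_entropy_def]]
  obtain L where L: "\<forall>x. x \<in> L x \<and> finite (L x) \<and> real (card (L x)) \<le> 2 powr a + 2"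
    and prob: "1 - p \<le> measure_pmf.expectation (uniform_bits n)
                          (\<lambda>x. measure_pmf.prob (out_dist alg n x) (L x))"
    by blast
  show ?thesis
    using L prob powr_plus_two_le[of a]
    by (auto simp: measure_pair_pmf_eq_expectation out_dist_def intro!: exI[of _ L]
             intro: order_trans)
qed

theorem lemma3p8:
  "\<exists>c::real. \<forall>(C :: algorithm set) (F :: func_family) (k :: nat \<Rightarrow> real) (p :: nat \<Rightarrow> real).
     (\<forall>n. 0 < p n \<and> p n < 1) \<longrightarrow>
     accessible_shannon_le C F k \<longrightarrow>
     accessible_maxent_le C F p (\<lambda>n. k n / p n + c * 2 powr (- (k n / p n)))"
proof (intro exI[of _ "2 / ln 2"] allI impI)
  fix C F and k p :: "nat \<Rightarrow> real"
  assume p: "\<forall>n. 0 < p n \<and> p n < 1" and "accessible_shannon_le C F k"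
  show "accessible_maxent_le C F p (\<lambda>n. k n / p n + 2 / ln 2 * 2 powr (- (k n / p n)))"
    unfolding accessible_maxent_le_def
  proof (intro ballI impI)
    fix alg assume "alg \<in> C" "collision_finder F alg"
    then have "\<forall>\<^sub>F n in sequentially. cond_entropy alg n \<le> p n * (k n / p n)"
      using \<open>accessible_shannon_le C F k\<close> p
      by (auto simp: accessible_shannon_le_def less_imp_neq[symmetric])
    then show "\<forall>\<^sub>F n in sequentially. \<exists>L.
        (\<forall>x\<in>bitstrings n. x \<in> L x \<and> finite (L x) \<and>
           real (card (L x)) \<le> 2 powr (k n / p n + 2 / ln 2 * 2 powr (- (k n / p n)))) \<and>
        1 - p n \<le> measure_pmf.prob (pair_pmf (uniform_bits n) (uniform_bits (fst alg n)))
                     {(x, r). snd alg n x r \<in> L x}"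
      using p exists_small_sets_of_cond_entropy by (auto elim!: eventually_mono)
  qed
qed

end
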